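(* Let $S$ be a finite generating subset of a group $G$ with $1\in S$. Assume that the graph $\Gamma=\mathrm{Cay}(G,S)$ is degenerate, and let $H$ be a subgroup of $G$ which is a $2$-fragment of $\Gamma$. Then $S^{-1}HS=S^{-1}S\cup a^{-1}Ha$ for some $a\in S$.
   Context: $\mathrm{Cay}(G,S)$ is the graph $(G,E)$ with $E=\{(x,y):x^{-1}y\in S\}$, so $\Gamma(X)=XS=\{xs:x\in X,s\in S\}$. Write $\partial(X)=XS\setminus X$ and $\nabla(X)=G\setminus XS$. $\Gamma$ is $k$-separable if there is a finite $X$ with $|X|\ge k$, $|\nabla(X)|\ge k$, and then $\kappa_k(\Gamma)=\min\{|\partial(X)|: X\text{ finite},|X|\ge k,|\nabla(X)|\ge k\}$. A $k$-fragment is a finite $X$ with $|X|\ge k$, $|\nabla(X)|\ge k$ and $|\partial(X)|=\kappa_k(\Gamma)$. $\Gamma$ is degenerate if it is $2$-separable and $\kappa_2(\Gamma)=\kappa_1(\Gamma)$. *)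

theory Defs
  imports "HOL-Algebra.Algebra"
begin

definition cay_nbhd :: "('a, 'b) monoid_scheme \<Rightarrow> 'a set \<Rightarrow> 'a set \<Rightarrow> 'a set" where
  "cay_nbhd G S A = {x \<otimes>\<^bsub>G\<^esub> s | x s. x \<in> A \<and> s \<in> S}"

definition cay_boundary :: "('a, 'b) monoid_scheme \<Rightarrow> 'a set \<Rightarrow> 'a set \<Rightarrow> 'a set" where
  "cay_boundary G S A = cay_nbhd G S A - A"

definition cay_exterior :: "('a, 'b) monoid_scheme \<Rightarrow> 'a set \<Rightarrow> 'a set \<Rightarrow> 'a set" where
  "cay_exterior G S A = carrier G - cay_nbhd G S A"

definition card_ge :: "'a set \<Rightarrow> nat \<Rightarrow> bool" where
  "card_ge A k \<longleftrightarrow> infinite A \<or> k \<le> card A"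

definition cay_admissible :: "('a, 'b) monoid_scheme \<Rightarrow> 'a set \<Rightarrow> nat \<Rightarrow> 'a set \<Rightarrow> bool" where
  "cay_admissible G S k A \<longleftrightarrow> A \<subseteq> carrier G \<and> finite A \<and> k \<le> card A
      \<and> card_ge (cay_exterior G S A) k"

definition k_separable :: "('a, 'b) monoid_scheme \<Rightarrow> 'a set \<Rightarrow> nat \<Rightarrow> bool" where
  "k_separable G S k \<longleftrightarrow> (\<exists>A. cay_admissible G S k A)"

definition kappa :: "('a, 'b) monoid_scheme \<Rightarrow> 'a set \<Rightarrow> nat \<Rightarrow> nat" where
  "kappa G S k = (LEAST n. \<exists>A. cay_admissible G S k A \<and> card (cay_boundary G S A) = n)"

definition k_fragment :: "('a, 'b) monoid_scheme \<Rightarrow> 'a set \<Rightarrow> nat \<Rightarrow> 'a set \<Rightarrow> bool" where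
  "k_fragment G S k A \<longleftrightarrow> cay_admissible G S k A \<and> card (cay_boundary G S A) = kappa G S k"

definition cay_degenerate :: "('a, 'b) monoid_scheme \<Rightarrow> 'a set \<Rightarrow> bool" where
  "cay_degenerate G S \<longleftrightarrow> k_separable G S 2 \<and> kappa G S 2 = kappa G S 1"

end

theory Submission
  imports Defs
begin

text \<open>
  Degeneracy gives \<open>|HS \ H| = \<kappa>\<^sub>2 = \<kappa>\<^sub>1 \<le> |S| - 1\<close>, hence \<open>|HS \ S| < |H|\<close>.
  The sets \<open>Hs \ S\<close> for \<open>s \<in> S\<close> in distinct cosets are disjoint subsets of \<open>HS \ S\<close>, so,
  with \<open>a \<in> S\<close> maximising \<open>|Ha \ S|\<close>, any \<open>s, t \<in> S\<close> not both in \<open>Ha\<close> satisfy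
  \<open>|Hs \ S| + |Ht \ S| < |H|\<close>. By pigeonhole some \<open>g \<in> H\<close> then has \<open>gs, ght \<in> S\<close>,
  and \<open>s\<^sup>-\<^sup>1ht = (gs)\<^sup>-\<^sup>1(ght) \<in> S\<^sup>-\<^sup>1S\<close>. If \<open>s, t \<in> Ha\<close> instead, \<open>s\<^sup>-\<^sup>1ht \<in> a\<^sup>-\<^sup>1Ha\<close>.
\<close>

lemma cay_nbhd_eq_image: "cay_nbhd G S A = (\<lambda>(x, s). x \<otimes>\<^bsub>G\<^esub> s) ` (A \<times> S)"
  unfolding cay_nbhd_def by auto

lemma finite_cay_nbhd: "finite A \<Longrightarrow> finite S \<Longrightarrow> finite (cay_nbhd G S A)"
  by (simp add: cay_nbhd_eq_image)

lemma card_ge_mono: "card_ge A k \<Longrightarrow> A \<subseteq> B \<Longrightarrow> l \<le> k \<Longrightarrow> card_ge B l"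
  unfolding card_ge_def by (meson card_mono finite_subset le_trans)

lemma kappa_le_card_boundary:
  "cay_admissible G S k A \<Longrightarrow> kappa G S k \<le> card (cay_boundary G S A)"
  unfolding kappa_def by (rule Least_le) blast

context group
begin

lemma subset_cay_nbhd_right: "\<one> \<in> S \<Longrightarrow> A \<subseteq> carrier G \<Longrightarrow> A \<subseteq> cay_nbhd G S A"
  unfolding cay_nbhd_def by (force intro: r_one[symmetric])

lemma subset_cay_nbhd_left: "\<one> \<in> A \<Longrightarrow> S \<subseteq> carrier G \<Longrightarrow> S \<subseteq> cay_nbhd G S A"
  unfolding cay_nbhd_def by (force intro: l_one[symmetric])

lemma cay_nbhd_one: "S \<subseteq> carrier G \<Longrightarrow> cay_nbhd G S {\<one>} = S"
  unfolding cay_nbhd_def by (auto, metis l_one subsetD)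

lemma rcos_subset_cay_nbhd: "s \<in> S \<Longrightarrow> H #> s \<subseteq> cay_nbhd G S H"
  unfolding r_coset_def cay_nbhd_def by blast

lemma kappa_one_less_card:
  assumes "S \<subseteq> carrier G" "finite S" "\<one> \<in> S" "card_ge (carrier G - S) 1"
  shows "kappa G S 1 < card S"
proof -
  have "cay_admissible G S 1 {\<one>}"
    using assms unfolding cay_admissible_def cay_exterior_def cay_nbhd_one[OF assms(1)] by auto
  then have "kappa G S 1 \<le> card (S - {\<one>})"
    using kappa_le_card_boundary[of G S 1 "{\<one>}"]
    unfolding cay_boundary_def cay_nbhd_one[OF assms(1)] by simp
  with assms(2,3) show ?thesis
    by (metis card_Diff1_less le_less_trans)
qed

lemma card_nbhd_diff_less_of_degenerate:
  assumes S: "S \<subseteq> carrier G" "finite S" "\<one> \<in> S"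
    and "cay_degenerate G S" "\<one> \<in> A" "k_fragment G S 2 A"
  shows "card (cay_nbhd G S A - S) < card A"
proof -
  have A: "A \<subseteq> carrier G" "finite A" and ext: "card_ge (cay_exterior G S A) 2"
    using assms(6) unfolding k_fragment_def cay_admissible_def by auto
  have AS: "A \<subseteq> cay_nbhd G S A" "S \<subseteq> cay_nbhd G S A" "finite (cay_nbhd G S A)"
    using subset_cay_nbhd_right subset_cay_nbhd_left finite_cay_nbhd assms A by auto
  have "card_ge (carrier G - S) 1"
    using card_ge_mono[OF ext, of "carrier G - S" 1] AS(2) by (auto simp: cay_exterior_def)
  then have "card (cay_boundary G S A) < card S"
    using assms kappa_one_less_card unfolding cay_degenerate_def k_fragment_def by auto
  then have "card (cay_nbhd G S A) < card S + card A"
    using AS A by (simp add: cay_boundary_def card_Diff_subset card_mono)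
  with AS S show ?thesis
    using card_mono[OF AS(3) AS(2)] by (simp add: card_Diff_subset)
qed

lemma card_rcos_diff_add_le:
  assumes "subgroup H G" "finite H" "S \<subseteq> carrier G" "finite S"
    and "s \<in> S" "t \<in> S" "H #> s \<noteq> H #> t"
  shows "card ((H #> s) - S) + card ((H #> t) - S) \<le> card (cay_nbhd G S H - S)"
proof -
  have fin: "finite (H #> u)" if "u \<in> S" for u
    using rev_finite_subset[OF finite_cay_nbhd[OF assms(2,4)] rcos_subset_cay_nbhd[OF that]] .
  have "(H #> s) \<inter> (H #> t) = {}"
    using rcos_disjoint[OF assms(1)] rcosetsI[OF subgroup.subset[OF assms(1)]] assms(3,5-7)
    by (auto simp: pairwise_def disjnt_def)
  then have "card ((H #> s) - S) + card ((H #> t) - S) = card (((H #> s) - S) \<union> ((H #> t) - S))"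
    using fin assms(5,6) by (intro card_Un_disjoint[symmetric]) auto
  also have "\<dots> \<le> card (cay_nbhd G S H - S)"
    using rcos_subset_cay_nbhd finite_cay_nbhd assms(2,4-6)
    by (intro card_mono) auto
  finally show ?thesis .
qed

lemma card_translates_outside:
  assumes "subgroup H G" "x \<in> carrier G"
  shows "card {g \<in> H. g \<otimes> x \<notin> S} = card ((H #> x) - S)"
proof (rule bij_betw_same_card)
  show "bij_betw (\<lambda>g. g \<otimes> x) {g \<in> H. g \<otimes> x \<notin> S} ((H #> x) - S)"
    using assms subgroup.subset[OF assms(1)]
    by (auto simp: bij_betw_def inj_on_def r_coset_def subset_iff)
qed

lemma exists_common_translate:
  assumes "subgroup H G" "x \<in> carrier G" "y \<in> carrier G"
    and "card ((H #> x) - S) + card ((H #> y) - S) < card H"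
  shows "\<exists>g\<in>H. g \<otimes> x \<in> S \<and> g \<otimes> y \<in> S"
proof (rule ccontr)
  assume "\<not> ?thesis"
  then have "H = {g \<in> H. g \<otimes> x \<notin> S} \<union> {g \<in> H. g \<otimes> y \<notin> S}"
    by blast
  then have "card H \<le> card {g \<in> H. g \<otimes> x \<notin> S} + card {g \<in> H. g \<otimes> y \<notin> S}"
    by (metis card_Un_le)
  with assms show False
    by (simp add: card_translates_outside)
qed

lemma sandwich_mem_quotient_set:
  assumes "subgroup H G" "S \<subseteq> carrier G" "s \<in> S" "t \<in> S" "h \<in> H"
    and "card ((H #> s) - S) + card ((H #> t) - S) < card H"
  shows "inv s \<otimes> h \<otimes> t \<in> {inv s' \<otimes> t' | s' t'. s' \<in> S \<and> t' \<in> S}"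
proof -
  interpret H: subgroup H G by fact
  have st: "s \<in> carrier G" "t \<in> carrier G" "h \<in> carrier G"
    using assms by auto
  have "H #> (h \<otimes> t) = H #> t"
    using repr_independence[OF rcosI[OF assms(5) H.subset st(2)] st(2) assms(1)] by simp
  then obtain g where g: "g \<in> H" "g \<otimes> s \<in> S" "g \<otimes> (h \<otimes> t) \<in> S"
    using exists_common_translate[of H s "h \<otimes> t" S] assms st by auto
  then have "inv s \<otimes> h \<otimes> t = inv (g \<otimes> s) \<otimes> (g \<otimes> (h \<otimes> t))"
    using st H.mem_carrier[OF g(1)]
    by (simp add: inv_mult_group m_assoc[symmetric]) (simp add: H.mem_carrier[OF g(1)] m_assoc)
  with g show ?thesis
    by blast
qed

lemma sandwich_mem_conj:
  assumes "subgroup H G" "a \<in> carrier G" "s \<in> H #> a" "t \<in> H #> a" "h \<in> H"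
  shows "inv s \<otimes> h \<otimes> t \<in> {inv a \<otimes> h' \<otimes> a | h'. h' \<in> H}"
proof -
  interpret H: subgroup H G by fact
  obtain g1 g2 where g: "g1 \<in> H" "g2 \<in> H" "s = g1 \<otimes> a" "t = g2 \<otimes> a"
    using assms(3,4) unfolding r_coset_def by auto
  then have "inv s \<otimes> h \<otimes> t = inv a \<otimes> (inv g1 \<otimes> h \<otimes> g2) \<otimes> a"
    using assms(2,5) by (simp add: inv_mult_group m_assoc)
  moreover have "inv g1 \<otimes> h \<otimes> g2 \<in> H"
    using g assms(5) by simp
  ultimately show ?thesis
    by blast
qed

lemma exists_rcos_excess_sum_less:
  assumes "subgroup H G" "finite H" "S \<subseteq> carrier G" "finite S" "S \<noteq> {}"
    and "card (cay_nbhd G S H - S) < card H"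
  shows "\<exists>a\<in>S. \<forall>s\<in>S. \<forall>t\<in>S. \<not> (H #> s = H #> a \<and> H #> t = H #> a)
           \<longrightarrow> card ((H #> s) - S) + card ((H #> t) - S) < card H"
proof -
  define excess where "excess x = card ((H #> x) - S)" for x
  have "Max (excess ` S) \<in> excess ` S"
    using assms(4,5) by simp
  then obtain a where a: "a \<in> S" "excess a = Max (excess ` S)"
    by (metis imageE)
  then have a_max: "excess s \<le> excess a" if "s \<in> S" for s
    using assms(4) that by simp
  have pair: "excess s + excess t < card H"
    if "s \<in> S" "t \<in> S" "H #> s \<noteq> H #> t" for s t
    using card_rcos_diff_add_le[OF assms(1-4) that] assms(6) unfolding excess_def by linarith
  have "excess s + excess t < card H"
    if "s \<in> S" "t \<in> S" "\<not> (H #> s = H #> a \<and> H #> t = H #> a)" for s t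
  proof (cases "H #> s = H #> t")
    case True
    with that pair[of s a] a(1) a_max show ?thesis
      unfolding excess_def by fastforce
  qed (use pair that in blast)
  with a(1) show ?thesis
    unfolding excess_def by blast
qed

lemma sandwich_set_eq:
  assumes "subgroup H G" "finite H" "S \<subseteq> carrier G" "finite S" "S \<noteq> {}"
    and "card (cay_nbhd G S H - S) < card H"
  shows "\<exists>a\<in>S. {inv s \<otimes> h \<otimes> t | s h t. s \<in> S \<and> h \<in> H \<and> t \<in> S}
           = {inv s \<otimes> t | s t. s \<in> S \<and> t \<in> S} \<union> {inv a \<otimes> h \<otimes> a | h. h \<in> H}"
proof -
  obtain a where a: "a \<in> S" and small: "\<And>s t. s \<in> S \<Longrightarrow> t \<in> S \<Longrightarrow>
      \<not> (H #> s = H #> a \<and> H #> t = H #> a) \<Longrightarrow> card ((H #> s) - S) + card ((H #> t) - S) < card H"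
    using exists_rcos_excess_sum_less[OF assms] by blast
  have "inv s \<otimes> h \<otimes> t \<in> {inv s \<otimes> t | s t. s \<in> S \<and> t \<in> S} \<union> {inv a \<otimes> h \<otimes> a | h. h \<in> H}"
    if "s \<in> S" "h \<in> H" "t \<in> S" for s h t
  proof (cases "H #> s = H #> a \<and> H #> t = H #> a")
    case True
    then have "s \<in> H #> a" "t \<in> H #> a"
      using rcos_self assms(1,3) that by (metis subsetD)+
    then show ?thesis
      using sandwich_mem_conj assms(1,3) a that(2) by blast
  next
    case False
    then show ?thesis
      using sandwich_mem_quotient_set[OF assms(1,3) that(1,3,2)] small[OF that(1,3)] by blast
  qed
  moreover have "inv s \<otimes> t = inv s \<otimes> \<one> \<otimes> t" if "s \<in> S" for s t
    using that assms(3) by auto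
  ultimately show ?thesis
    using a subgroup.one_closed[OF assms(1)] by blast
qed

end

theorem lemma9p2:
  fixes G (structure) and S H :: "'a set"
  assumes "group G"
    and "S \<subseteq> carrier G" and "finite S" and "generate G S = carrier G"
    and "\<one> \<in> S"
    and "cay_degenerate G S"
    and "subgroup H G"
    and "k_fragment G S 2 H"
  shows "\<exists>a\<in>S. {inv s \<otimes> h \<otimes> t | s h t. s \<in> S \<and> h \<in> H \<and> t \<in> S}
           = {inv s \<otimes> t | s t. s \<in> S \<and> t \<in> S} \<union> {inv a \<otimes> h \<otimes> a | h. h \<in> H}"
proof -
  interpret group G by fact
  have "finite H"
    using assms(8) by (simp add: k_fragment_def cay_admissible_def)
  moreover have "card (cay_nbhd G S H - S) < card H"
    using card_nbhd_diff_less_of_degenerate assms(2,3,5,6,8) subgroup.one_closed[OF assms(7)]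
    by blast
  ultimately show ?thesis
    using sandwich_set_eq assms(2,3,5,7) by blast
qed

end
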